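(* Consider the generative logic with $\mu\to1$ in the setting below. Let $\Delta$ be a finite multiset of time-indexed formulas such that $E'(\Delta)=\emptyset$. Then for every $k\in\{1,\dots,K\}$, $p(D=d_k\mid\Delta)=p(D=d_k)=1/K$.
   Context: Let $\mathcal{L}$ be a propositional language and let $K,T\ge1$. There are data sequences $d_1,\dots,d_K$; repetitions are allowed, and data are identified by their index $k$. Each $d_k$ is associated with a sequence of models $m(d_k)=(m(d_k)^1,\dots,m(d_k)^T)$ of $\mathcal{L}$. The prior is $p(D=d_k)=1/K$. A time-indexed formula is written $\alpha^t$, with $\alpha\in\mathcal{L}$ and $1\le t\le T$. Write $[\![\alpha^t]\!]_k=1$ if $\alpha$ is true in $m(d_k)^t$, and $0$ otherwise. For $\mu\in(0,1)$ and a finite multiset $X$ of time-indexed formulas, define $$p(X\mid d_k,\mu)=\prod_{\alpha^t\in X}\mu^{[\![\alpha^t]\!]_k}(1-\mu)^{1-[\![\alpha^t]\!]_k}.$$ Then define $$p(D=d_k\mid\Delta)=\lim_{\mu\to1}\frac{p(\Delta\mid d_k,\mu)\,p(d_k)}{\sum_j p(\Delta\mid d_j,\mu)\,p(d_j)}.$$ An index $k$ is an evidence of $X$ if $[\![\alpha^t]\!]_k=1$ for all $\alpha^t\in X$. Let $E(X)$ be the set of such indices. $X$ is called founded if $E(X)\neq\emptyset$. Let $MFS(\Delta)$ be the set of nonempty founded sub-multisets $S\subseteq\Delta$ that have maximum cardinality among all nonempty founded sub-multisets of $\Delta$. Set $E'(\Delta)=\bigcup_{S\in MFS(\Delta)}E(S)$.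 This union is empty if $MFS(\Delta)=\emptyset$. Thus $E'(\Delta)=\emptyset$ iff no index is an evidence of any singleton of $\Delta$. *)

theory Defs
  imports "HOL-Analysis.Analysis" "HOL-Library.Multiset"
begin

text \<open>The data d_1..d_K are identified by their index k;
  mdl k t is the model m(d_k)^t.  A time-indexed formula alpha^t is a pair (alpha, t).\<close>

definition truth :: "('m \<Rightarrow> 'f \<Rightarrow> bool) \<Rightarrow> (nat \<Rightarrow> nat \<Rightarrow> 'm) \<Rightarrow> nat \<Rightarrow> 'f \<times> nat \<Rightarrow> nat" where
  "truth sat mdl k x = (if sat (mdl k (snd x)) (fst x) then 1 else 0)"

definition lik :: "('m \<Rightarrow> 'f \<Rightarrow> bool) \<Rightarrow> (nat \<Rightarrow> nat \<Rightarrow> 'm) \<Rightarrow> ('f \<times> nat) multiset \<Rightarrow> nat \<Rightarrow> real \<Rightarrow> real" where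
  "lik sat mdl X k \<mu> =
     (\<Prod>x\<in>#X. \<mu> ^ truth sat mdl k x * (1 - \<mu>) ^ (1 - truth sat mdl k x))"

definition prior :: "nat \<Rightarrow> nat \<Rightarrow> real" where
  "prior K k = 1 / real K"

text \<open>The ratio inside the limit defining p(D = d_k | Delta).\<close>
definition post_ratio :: "('m \<Rightarrow> 'f \<Rightarrow> bool) \<Rightarrow> (nat \<Rightarrow> nat \<Rightarrow> 'm) \<Rightarrow> nat \<Rightarrow> ('f \<times> nat) multiset \<Rightarrow> nat \<Rightarrow> real \<Rightarrow> real" where
  "post_ratio sat mdl K \<Delta> k \<mu> =
     lik sat mdl \<Delta> k \<mu> * prior K k / (\<Sum>j\<in>{1..K}. lik sat mdl \<Delta> j \<mu> * prior K j)"

definition evidence :: "('m \<Rightarrow> 'f \<Rightarrow> bool) \<Rightarrow> (nat \<Rightarrow> nat \<Rightarrow> 'm) \<Rightarrow> nat \<Rightarrow> ('f \<times> nat) multiset \<Rightarrow> nat set" where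
  "evidence sat mdl K X = {k \<in> {1..K}. \<forall>x\<in>#X. sat (mdl k (snd x)) (fst x)}"

definition founded :: "('m \<Rightarrow> 'f \<Rightarrow> bool) \<Rightarrow> (nat \<Rightarrow> nat \<Rightarrow> 'm) \<Rightarrow> nat \<Rightarrow> ('f \<times> nat) multiset \<Rightarrow> bool" where
  "founded sat mdl K X \<longleftrightarrow> evidence sat mdl K X \<noteq> {}"

definition MFS :: "('m \<Rightarrow> 'f \<Rightarrow> bool) \<Rightarrow> (nat \<Rightarrow> nat \<Rightarrow> 'm) \<Rightarrow> nat \<Rightarrow> ('f \<times> nat) multiset \<Rightarrow> ('f \<times> nat) multiset set" where
  "MFS sat mdl K \<Delta> = {S. S \<subseteq># \<Delta> \<and> S \<noteq> {#} \<and> founded sat mdl K S \<and>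
     (\<forall>S'. S' \<subseteq># \<Delta> \<and> S' \<noteq> {#} \<and> founded sat mdl K S' \<longrightarrow> size S' \<le> size S)}"

definition evidence' :: "('m \<Rightarrow> 'f \<Rightarrow> bool) \<Rightarrow> (nat \<Rightarrow> nat \<Rightarrow> 'm) \<Rightarrow> nat \<Rightarrow> ('f \<times> nat) multiset \<Rightarrow> nat set" where
  "evidence' sat mdl K \<Delta> = (\<Union>S\<in>MFS sat mdl K \<Delta>. evidence sat mdl K S)"

end

theory Submission
  imports Defs
begin

text \<open>If \<open>E'(\<Delta>) = \<emptyset>\<close>, no datum satisfies any single formula of \<open>\<Delta>\<close>, so every
  likelihood equals \<open>(1 - \<mu>)^|\<Delta>|\<close>. All data are then equally likely and the
  posterior ratio is constantly the prior \<open>1/K\<close> for \<open>\<mu> < 1\<close>.\<close>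

lemma MFS_nonempty:
  assumes "S \<subseteq># \<Delta>" and "S \<noteq> {#}" and "founded sat mdl K S"
  shows "MFS sat mdl K \<Delta> \<noteq> {}"
proof -
  define A where "A = {S. S \<subseteq># \<Delta> \<and> S \<noteq> {#} \<and> founded sat mdl K S}"
  have "S \<in> A" using assms by (simp add: A_def)
  have fin: "finite (size ` A)"
    by (rule finite_subset[of _ "{..size \<Delta>}"]) (auto simp: A_def size_mset_mono)
  have "Max (size ` A) \<in> size ` A" using fin \<open>S \<in> A\<close> by (intro Max_in) auto
  then obtain S' where "S' \<in> A" and "size S' = Max (size ` A)" by auto
  then have "S' \<in> MFS sat mdl K \<Delta>"
    using fin unfolding MFS_def A_def by (auto intro: Max_ge)
  then show ?thesis by blast
qed

lemma evidence'_empty_imp_not_sat: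
  assumes "evidence' sat mdl K \<Delta> = {}" and "x \<in># \<Delta>" and "j \<in> {1..K}"
  shows "\<not> sat (mdl j (snd x)) (fst x)"
proof
  assume "sat (mdl j (snd x)) (fst x)"
  then have "founded sat mdl K {#x#}"
    using assms(3) by (auto simp: founded_def evidence_def)
  then obtain S where "S \<in> MFS sat mdl K \<Delta>"
    using MFS_nonempty[of "{#x#}" \<Delta> sat mdl K] assms(2) by auto
  then have "evidence sat mdl K S \<noteq> {}" by (simp add: MFS_def founded_def)
  with \<open>S \<in> MFS sat mdl K \<Delta>\<close> show False
    using assms(1) unfolding evidence'_def by auto
qed

lemma lik_if_none_sat:
  assumes "\<forall>x\<in>#X. \<not> sat (mdl k (snd x)) (fst x)"
  shows "lik sat mdl X k \<mu> = (1 - \<mu>) ^ size X"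
proof -
  have "lik sat mdl X k \<mu> = (\<Prod>x\<in>#X. 1 - \<mu>)"
    unfolding lik_def using assms
    by (intro arg_cong[where f = prod_mset] image_mset_cong) (simp add: truth_def)
  then show ?thesis by simp
qed

lemma post_ratio_eq_prior_if_lik_const:
  assumes "K \<ge> 1" and "k \<in> {1..K}" and "c \<noteq> 0"
    and "\<And>j. j \<in> {1..K} \<Longrightarrow> lik sat mdl \<Delta> j \<mu> = c"
  shows "post_ratio sat mdl K \<Delta> k \<mu> = prior K k"
  using assms by (simp add: post_ratio_def prior_def field_simps)

theorem theorem4:
  fixes sat :: "'m \<Rightarrow> 'f \<Rightarrow> bool" and mdl :: "nat \<Rightarrow> nat \<Rightarrow> 'm"
    and K T :: nat and \<Delta> :: "('f \<times> nat) multiset" and k :: nat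
  assumes "K \<ge> 1" and "T \<ge> 1"
    and "\<forall>x\<in>#\<Delta>. 1 \<le> snd x \<and> snd x \<le> T"
    and "evidence' sat mdl K \<Delta> = {}"
    and "k \<in> {1..K}"
  shows "(post_ratio sat mdl K \<Delta> k \<longlongrightarrow> prior K k) (at_left 1) \<and> prior K k = 1 / real K"
proof -
  have lik: "lik sat mdl \<Delta> j \<mu> = (1 - \<mu>) ^ size \<Delta>" if "j \<in> {1..K}" for j \<mu>
    using evidence'_empty_imp_not_sat[OF assms(4) _ that] by (simp add: lik_if_none_sat)
  have "post_ratio sat mdl K \<Delta> k \<mu> = prior K k" if "\<mu> < 1" for \<mu>
    using that by (intro post_ratio_eq_prior_if_lik_const[OF assms(1,5), of "(1 - \<mu>) ^ size \<Delta>"])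
      (simp_all add: lik)
  then have "\<forall>\<^sub>F \<mu> in at_left 1. post_ratio sat mdl K \<Delta> k \<mu> = prior K k"
    by (intro eventually_at_leftI[of 0]) auto
  then have "(post_ratio sat mdl K \<Delta> k \<longlongrightarrow> prior K k) (at_left 1)"
    by (rule tendsto_eventually)
  then show ?thesis by (simp add: prior_def)
qed

end
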